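(* Let $E=E(R/\mathfrak m)$ and for an $R$-module $N$ let $N^\circ=\mathrm{Hom}_R(N,E)$. Then: (a) if $N^\circ$ is simple-$\mathcal F$-torsion-free, then $N$ is simple-$\mathcal F$-divisible; (b) if $N^\circ$ is simple-$\mathcal F$-divisible, then $N$ is simple-$\mathcal F$-torsion-free; (c) if $N$ is reflexive (the canonical map $N\to N^{\circ\circ}$ is an isomorphism), then the converses of (a) and (b) also hold.
   Context: Throughout, $R$ is a commutative Noetherian local ring with maximal ideal $\mathfrak m$, and $E(R/\mathfrak m)$ is the injective hull of $R/\mathfrak m$. $\mathcal F$ is a Gabriel topology on $R$: a nonempty set of ideals of $R$ such that (1) if $\mathfrak a\in\mathcal F$ and $\mathfrak a\subseteq\mathfrak b$ then $\mathfrak b\in\mathcal F$; (2) if $\mathfrak a,\mathfrak b\in\mathcal F$ then $\mathfrak a\cap\mathfrak b\in\mathcal F$; (3) if $\mathfrak b$ is an ideal and there is $\mathfrak a\in\mathcal F$ with $(\mathfrak b:r)\in\mathcal F$ for all $r\in\mathfrak a$, then $\mathfrak b\in\mathcal F$. For an $R$-module $X$ and ideal $\mathfrak a$, $X[\mathfrak a]=\{x\in X:\mathfrak a x=0\}$. $X$ is $\mathcal F$-torsion-free if $X[\mathfrak a]=0$ for all $\mathfrak a\in\mathcal F$, and $\mathcal F$-divisible if $\mathfrak aX=X$ for all $\mathfrak a\in\mathcal F$. $M$ is simple-$\mathcal F$-torsion-free if $M\neq0$, $M$ is $\mathcal F$-torsion-free, and for every submodule $0\neq U\subsetneq M$, $M/U$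 is not $\mathcal F$-torsion-free; $N$ is simple-$\mathcal F$-divisible if $N\ne0$, $N$ is $\mathcal F$-divisible, and no submodule $0\neq V\subsetneq N$ is $\mathcal F$-divisible. *)

theory Defs
  imports Main "HOL-Library.Function_Algebras"
begin

text \<open>The ring R is the type 'r (a commutative ring with 1). An R-module is given by a
carrier set M inside an abelian group type together with a scalar multiplication sc.\<close>

definition r_ideal :: "'r::comm_ring_1 set \<Rightarrow> bool" where
  "r_ideal I \<longleftrightarrow> 0 \<in> I \<and> (\<forall>x\<in>I. \<forall>y\<in>I. x + y \<in> I) \<and> (\<forall>r x. x \<in> I \<longrightarrow> r * x \<in> I)"

definition gen_ideal :: "'r::comm_ring_1 set \<Rightarrow> 'r set" where
  "gen_ideal G = {(\<Sum>i\<in>S. c i * g i) | S c g. finite (S::nat set) \<and> g ` S \<subseteq> G}"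

definition noetherian_ring :: "'r::comm_ring_1 itself \<Rightarrow> bool" where
  "noetherian_ring _ \<longleftrightarrow> (\<forall>I::'r set. r_ideal I \<longrightarrow> (\<exists>G. finite G \<and> I = gen_ideal G))"

definition local_ring_max :: "'r::comm_ring_1 set \<Rightarrow> bool" where
  "local_ring_max m \<longleftrightarrow> r_ideal m \<and> m \<noteq> UNIV \<and>
     (\<forall>I. r_ideal I \<and> I \<noteq> UNIV \<longrightarrow> I \<subseteq> m)"

definition colon_ideal :: "'r::comm_ring_1 set \<Rightarrow> 'r \<Rightarrow> 'r set" where
  "colon_ideal b r = {x. x * r \<in> b}"

definition gabriel_topology :: "'r::comm_ring_1 set set \<Rightarrow> bool" where
  "gabriel_topology F \<longleftrightarrow> F \<noteq> {} \<and> (\<forall>a\<in>F. r_ideal a) \<and>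
     (\<forall>a b. a \<in> F \<and> r_ideal b \<and> a \<subseteq> b \<longrightarrow> b \<in> F) \<and>
     (\<forall>a\<in>F. \<forall>b\<in>F. a \<inter> b \<in> F) \<and>
     (\<forall>b. r_ideal b \<and> (\<exists>a\<in>F. \<forall>r\<in>a. colon_ideal b r \<in> F) \<longrightarrow> b \<in> F)"

definition r_module :: "'m::ab_group_add set \<Rightarrow> ('r::comm_ring_1 \<Rightarrow> 'm \<Rightarrow> 'm) \<Rightarrow> bool" where
  "r_module M sc \<longleftrightarrow> 0 \<in> M \<and> (\<forall>x\<in>M. \<forall>y\<in>M. x + y \<in> M) \<and> (\<forall>x\<in>M. - x \<in> M) \<and>
     (\<forall>r. \<forall>x\<in>M. sc r x \<in> M) \<and>
     (\<forall>r. \<forall>x\<in>M. \<forall>y\<in>M. sc r (x + y) = sc r x + sc r y) \<and>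
     (\<forall>r s. \<forall>x\<in>M. sc (r + s) x = sc r x + sc s x) \<and>
     (\<forall>r s. \<forall>x\<in>M. sc (r * s) x = sc r (sc s x)) \<and>
     (\<forall>x\<in>M. sc 1 x = x)"

definition submodule :: "'m::ab_group_add set \<Rightarrow> ('r::comm_ring_1 \<Rightarrow> 'm \<Rightarrow> 'm) \<Rightarrow> 'm set \<Rightarrow> bool" where
  "submodule M sc U \<longleftrightarrow> U \<subseteq> M \<and> 0 \<in> U \<and> (\<forall>x\<in>U. \<forall>y\<in>U. x + y \<in> U) \<and>
     (\<forall>r. \<forall>x\<in>U. sc r x \<in> U)"

definition annihilated :: "'m::ab_group_add set \<Rightarrow> ('r::comm_ring_1 \<Rightarrow> 'm \<Rightarrow> 'm) \<Rightarrow> 'r set \<Rightarrow> 'm set" where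
  "annihilated X sc a = {x\<in>X. \<forall>r\<in>a. sc r x = 0}"

definition F_torsion_free :: "'r::comm_ring_1 set set \<Rightarrow> 'm::ab_group_add set \<Rightarrow> ('r \<Rightarrow> 'm \<Rightarrow> 'm) \<Rightarrow> bool" where
  "F_torsion_free F X sc \<longleftrightarrow> (\<forall>a\<in>F. annihilated X sc a = {0})"

text \<open>The quotient module M/U is F-torsion-free: for a in F, (M/U)[a] = 0, i.e. the only
coset x + U (x in M) with a(x+U) = 0 in M/U (i.e. a x contained in U) is the zero coset U.\<close>
definition quotient_F_torsion_free ::
  "'r::comm_ring_1 set set \<Rightarrow> 'm::ab_group_add set \<Rightarrow> ('r \<Rightarrow> 'm \<Rightarrow> 'm) \<Rightarrow> 'm set \<Rightarrow> bool" where
  "quotient_F_torsion_free F M sc U \<longleftrightarrow>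
     (\<forall>a\<in>F. \<forall>x\<in>M. (\<forall>r\<in>a. sc r x \<in> U) \<longrightarrow> x \<in> U)"

definition ideal_smult :: "'r::comm_ring_1 set \<Rightarrow> 'm::ab_group_add set \<Rightarrow> ('r \<Rightarrow> 'm \<Rightarrow> 'm) \<Rightarrow> 'm set" where
  "ideal_smult a X sc = {(\<Sum>i\<in>S. sc (c i) (y i)) | S c y. finite (S::nat set) \<and> c ` S \<subseteq> a \<and> y ` S \<subseteq> X}"

definition F_divisible :: "'r::comm_ring_1 set set \<Rightarrow> 'm::ab_group_add set \<Rightarrow> ('r \<Rightarrow> 'm \<Rightarrow> 'm) \<Rightarrow> bool" where
  "F_divisible F X sc \<longleftrightarrow> (\<forall>a\<in>F. ideal_smult a X sc = X)"

definition simple_F_torsion_free :: "'r::comm_ring_1 set set \<Rightarrow> 'm::ab_group_add set \<Rightarrow> ('r \<Rightarrow> 'm \<Rightarrow> 'm) \<Rightarrow> bool" where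
  "simple_F_torsion_free F M sc \<longleftrightarrow> M \<noteq> {0} \<and> F_torsion_free F M sc \<and>
     (\<forall>U. submodule M sc U \<and> U \<noteq> {0} \<and> U \<noteq> M \<longrightarrow> \<not> quotient_F_torsion_free F M sc U)"

definition simple_F_divisible :: "'r::comm_ring_1 set set \<Rightarrow> 'm::ab_group_add set \<Rightarrow> ('r \<Rightarrow> 'm \<Rightarrow> 'm) \<Rightarrow> bool" where
  "simple_F_divisible F N sc \<longleftrightarrow> N \<noteq> {0} \<and> F_divisible F N sc \<and>
     (\<forall>V. submodule N sc V \<and> V \<noteq> {0} \<and> V \<noteq> N \<longrightarrow> \<not> F_divisible F V sc)"

text \<open>Hom_R(N, E), as extensional functions (zero outside N), with pointwise module structure.\<close>
definition hom_mod :: "'n::ab_group_add set \<Rightarrow> ('r::comm_ring_1 \<Rightarrow> 'n \<Rightarrow> 'n) \<Rightarrow>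
    'e::ab_group_add set \<Rightarrow> ('r \<Rightarrow> 'e \<Rightarrow> 'e) \<Rightarrow> ('n \<Rightarrow> 'e) set" where
  "hom_mod N scN E scE = {f. (\<forall>x\<in>N. f x \<in> E) \<and> (\<forall>x\<in>N. \<forall>y\<in>N. f (x + y) = f x + f y) \<and>
      (\<forall>r. \<forall>x\<in>N. f (scN r x) = scE r (f x)) \<and> (\<forall>x. x \<notin> N \<longrightarrow> f x = 0)}"

definition hom_sc :: "'n set \<Rightarrow> ('r \<Rightarrow> 'e \<Rightarrow> 'e) \<Rightarrow> 'r \<Rightarrow> ('n \<Rightarrow> 'e::zero) \<Rightarrow> ('n \<Rightarrow> 'e)" where
  "hom_sc N scE r f = (\<lambda>x. if x \<in> N then scE r (f x) else 0)"

text \<open>Injective module (via Baer's criterion: homomorphisms from ideals of R extend to R).\<close>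
definition injective_module :: "'e::ab_group_add set \<Rightarrow> ('r::comm_ring_1 \<Rightarrow> 'e \<Rightarrow> 'e) \<Rightarrow> bool" where
  "injective_module E sc \<longleftrightarrow> (\<forall>I h. r_ideal I \<and> (\<forall>x\<in>I. h x \<in> E) \<and>
       (\<forall>x\<in>I. \<forall>y\<in>I. h (x + y) = h x + h y) \<and> (\<forall>r. \<forall>x\<in>I. h (r * x) = sc r (h x)) \<longrightarrow>
       (\<exists>e\<in>E. \<forall>x\<in>I. h x = sc x e))"

text \<open>E is an injective hull of R/m: E is injective and is an essential extension of a copy
of R/m, namely the image of an R-linear map g : R \<rightarrow> E with kernel m.\<close>
definition injective_hull_residue :: "'r::comm_ring_1 set \<Rightarrow> 'e::ab_group_add set \<Rightarrow> ('r \<Rightarrow> 'e \<Rightarrow> 'e) \<Rightarrow> bool" where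
  "injective_hull_residue m E sc \<longleftrightarrow> r_module E sc \<and> injective_module E sc \<and>
     (\<exists>g. (\<forall>r. g r \<in> E) \<and> (\<forall>r s. g (r + s) = g r + g s) \<and> (\<forall>r s. g (r * s) = sc r (g s)) \<and>
          {r. g r = 0} = m \<and>
          (\<forall>V. submodule E sc V \<and> V \<noteq> {0} \<longrightarrow> V \<inter> range g \<noteq> {0}))"

definition reflexive_mod :: "'n::ab_group_add set \<Rightarrow> ('r::comm_ring_1 \<Rightarrow> 'n \<Rightarrow> 'n) \<Rightarrow>
    'e::ab_group_add set \<Rightarrow> ('r \<Rightarrow> 'e \<Rightarrow> 'e) \<Rightarrow> bool" where
  "reflexive_mod N scN E scE \<longleftrightarrow>
     (let D = hom_mod N scN E scE;
          ev = (\<lambda>x. if x \<in> N then (\<lambda>f. if f \<in> D then f x else 0) else 0)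
      in ev \<in> hom_mod N scN (hom_mod D (hom_sc N scE) E scE) (hom_sc D scE) \<and>
         bij_betw ev N (hom_mod D (hom_sc N scE) E scE))"

end

theory Submission
  imports Defs
begin

text \<open>
  Write N' = Hom(N, E). Since E is injective and contains R/m, for every submodule U and every x
  outside U there is a map into E vanishing on U but not at x. Hence U \<mapsto> U^perp (the maps vanishing
  on U) and W \<mapsto> W_perp (the common zeros of W) reverse inclusions and send proper nonzero
  submodules to proper nonzero submodules, the latter provided W = (W_perp)^perp, which holds for every
  W when N is reflexive. They exchange the two notions: V divisible makes N'/V^perp torsion-free,
  W divisible makes N/W_perp torsion-free, N/U torsion-free makes U^perp divisible (this needs the
  ideals of F to be finitely generated), and N'/W torsion-free with W = (W_perp)^perp makes W_perp
  divisible. Applied to 0 and to the whole module these statements transfer torsion-freeness and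
  divisibility; applied to a proper nonzero submodule they transfer a violation of minimality.\<close>

locale rmodule =
  fixes M :: "'m::ab_group_add set" and sc :: "'r::comm_ring_1 \<Rightarrow> 'm \<Rightarrow> 'm"
  assumes module: "r_module M sc"
begin

lemma zero_in: "0 \<in> M" and add_in: "x \<in> M \<Longrightarrow> y \<in> M \<Longrightarrow> x + y \<in> M"
  and neg_in: "x \<in> M \<Longrightarrow> - x \<in> M" and sc_in: "x \<in> M \<Longrightarrow> sc r x \<in> M"
  and sc_add: "x \<in> M \<Longrightarrow> y \<in> M \<Longrightarrow> sc r (x + y) = sc r x + sc r y"
  and add_sc: "x \<in> M \<Longrightarrow> sc (r + s) x = sc r x + sc s x"
  and mult_sc: "x \<in> M \<Longrightarrow> sc (r * s) x = sc r (sc s x)"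
  and one_sc: "x \<in> M \<Longrightarrow> sc 1 x = x"
  using module unfolding r_module_def by blast+

lemma diff_in: "x \<in> M \<Longrightarrow> y \<in> M \<Longrightarrow> x - y \<in> M"
  using add_in neg_in by (metis diff_conv_add_uminus)

lemma sc_comm: "x \<in> M \<Longrightarrow> sc r (sc s x) = sc s (sc r x)"
  using mult_sc[of x r s] mult_sc[of x s r] by (simp add: mult.commute)

lemma zero_sc: "x \<in> M \<Longrightarrow> sc 0 x = 0"
  using add_sc[of x 0 0] by simp

lemma sc_zero: "sc r 0 = 0"
  using sc_add[OF zero_in zero_in, of r] by simp

lemma neg_sc: "x \<in> M \<Longrightarrow> sc (- r) x = - sc r x"
  using add_sc[of x r "- r"] zero_sc by (simp add: add.commute eq_neg_iff_add_eq_0)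

lemma diff_sc: "x \<in> M \<Longrightarrow> sc (r - s) x = sc r x - sc s x"
  using add_sc[of x r "- s"] neg_sc by simp

lemma sc_neg: "x \<in> M \<Longrightarrow> sc r (- x) = - sc r x"
  using sc_add[of x "- x" r] neg_in sc_zero by (simp add: add.commute eq_neg_iff_add_eq_0)

lemma sum_in: "(\<And>i. i \<in> S \<Longrightarrow> f i \<in> M) \<Longrightarrow> sum f S \<in> M"
  by (induction S rule: infinite_finite_induct) (auto intro: zero_in add_in)

lemma sum_sc: "x \<in> M \<Longrightarrow> sc (sum f S) x = (\<Sum>i\<in>S. sc (f i) x)"
  by (induction S rule: infinite_finite_induct) (auto simp: zero_sc add_sc)

lemma sc_sum: "(\<And>i. i \<in> S \<Longrightarrow> f i \<in> M) \<Longrightarrow> sc r (sum f S) = (\<Sum>i\<in>S. sc r (f i))"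
  by (induction S rule: infinite_finite_induct) (auto simp: sc_zero sc_add sum_in)

lemma submodule_self: "submodule M sc M"
  unfolding submodule_def using zero_in add_in sc_in by blast

lemma submodule_zero: "submodule M sc {0}"
  unfolding submodule_def using zero_in sc_zero by simp

lemma submodule_sum: "submodule M sc U \<Longrightarrow> (\<And>i. i \<in> S \<Longrightarrow> f i \<in> U) \<Longrightarrow> sum f S \<in> U"
  unfolding submodule_def by (induction S rule: infinite_finite_induct) auto

lemma submodule_neg: "submodule M sc U \<Longrightarrow> x \<in> U \<Longrightarrow> - x \<in> U"
  unfolding submodule_def using neg_sc[of x 1] one_sc by (metis subsetD)

lemma submodule_diff: "submodule M sc U \<Longrightarrow> x \<in> U \<Longrightarrow> y \<in> U \<Longrightarrow> x - y \<in> U"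
  using submodule_neg[of U y] unfolding submodule_def by (metis diff_conv_add_uminus)

end

lemma submodule_subset: "submodule M sc U \<Longrightarrow> U \<subseteq> M"
  unfolding submodule_def by blast

lemma r_module_ring: "r_module (UNIV :: 'r::comm_ring_1 set) (*)"
  unfolding r_module_def by (simp add: algebra_simps)

lemma ideal_smultI:
  "finite (S::nat set) \<Longrightarrow> c ` S \<subseteq> a \<Longrightarrow> y ` S \<subseteq> X \<Longrightarrow> (\<Sum>i\<in>S. sc (c i) (y i)) \<in> ideal_smult a X sc"
  unfolding ideal_smult_def by blast

lemma ideal_smultE:
  assumes "x \<in> ideal_smult a X sc"
  obtains S :: "nat set" and c y
  where "x = (\<Sum>i\<in>S. sc (c i) (y i))" "finite S" "c ` S \<subseteq> a" "y ` S \<subseteq> X"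
  using assms unfolding ideal_smult_def by blast

lemma ideal_smult_single: "r \<in> a \<Longrightarrow> y \<in> X \<Longrightarrow> sc r y \<in> ideal_smult a X sc"
  using ideal_smultI[of "{0::nat}" "\<lambda>_. r" a "\<lambda>_. y" X sc] by simp

lemma ideal_smult_zero: "0 \<in> ideal_smult a X sc"
  using ideal_smultI[of "{}" _ a _ X sc] by simp

lemma ideal_smult_add:
  assumes x: "x \<in> ideal_smult a X sc" and y: "y \<in> ideal_smult a X sc"
  shows "x + y \<in> ideal_smult a X sc"
proof -
  obtain S :: "nat set" and c z where S: "x = (\<Sum>i\<in>S. sc (c i) (z i))" "finite S" "c ` S \<subseteq> a" "z ` S \<subseteq> X"
    using x by (rule ideal_smultE)
  obtain T :: "nat set" and d w where T: "y = (\<Sum>i\<in>T. sc (d i) (w i))" "finite T" "d ` T \<subseteq> a" "w ` T \<subseteq> X"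
    using y by (rule ideal_smultE)
  \<comment> \<open>interleave the two index sets as the even and the odd numbers\<close>
  define S' where "S' = (\<lambda>i::nat. 2 * i) ` S"
  define T' where "T' = (\<lambda>i::nat. 2 * i + 1) ` T"
  define c' where "c' i = (if even i then c (i div 2) else d (i div 2))" for i
  define z' where "z' i = (if even i then z (i div 2) else w (i div 2))" for i
  have disjoint: "S' \<inter> T' = {}" unfolding S'_def T'_def by (auto, presburger)
  have inj: "inj_on (\<lambda>i::nat. 2 * i) S" "inj_on (\<lambda>i::nat. 2 * i + 1) T" by (auto simp: inj_on_def)
  have "(\<Sum>i\<in>S'. sc (c' i) (z' i)) = x"
    unfolding S'_def S(1) by (subst sum.reindex[OF inj(1)]) (simp add: c'_def z'_def)
  moreover have "(\<Sum>i\<in>T'. sc (c' i) (z' i)) = y"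
    unfolding T'_def T(1) by (subst sum.reindex[OF inj(2)]) (simp add: c'_def z'_def)
  ultimately have "x + y = (\<Sum>i\<in>S' \<union> T'. sc (c' i) (z' i))"
    using disjoint S(2) T(2) by (simp add: S'_def T'_def sum.union_disjoint)
  moreover have "finite (S' \<union> T')" "c' ` (S' \<union> T') \<subseteq> a" "z' ` (S' \<union> T') \<subseteq> X"
    using S T by (auto simp: S'_def T'_def c'_def z'_def)
  ultimately show ?thesis using ideal_smultI by metis
qed

context rmodule
begin

lemma ideal_smult_subset:
  assumes U: "submodule M sc U" and X: "X \<subseteq> U"
  shows "ideal_smult a X sc \<subseteq> U"
proof
  fix x assume "x \<in> ideal_smult a X sc"
  then obtain S :: "nat set" and c y where "x = (\<Sum>i\<in>S. sc (c i) (y i))" "y ` S \<subseteq> X"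
    by (rule ideal_smultE)
  moreover have "sc (c i) (y i) \<in> U" if "i \<in> S" for i
    using that U X \<open>y ` S \<subseteq> X\<close> unfolding submodule_def by blast
  ultimately show "x \<in> U" using submodule_sum[OF U, of S "\<lambda>i. sc (c i) (y i)"] by simp
qed

lemma ideal_smult_submodule:
  assumes a: "r_ideal a" and X: "X \<subseteq> M"
  shows "submodule M sc (ideal_smult a X sc)"
  unfolding submodule_def
proof (intro conjI ballI allI ideal_smult_zero ideal_smult_add)
  show "ideal_smult a X sc \<subseteq> M" using ideal_smult_subset[OF submodule_self X] .
next
  fix r x assume "x \<in> ideal_smult a X sc"
  then obtain S :: "nat set" and c y where S: "x = (\<Sum>i\<in>S. sc (c i) (y i))" "finite S" "c ` S \<subseteq> a" "y ` S \<subseteq> X"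
    by (rule ideal_smultE)
  have y: "y i \<in> M" if "i \<in> S" for i using S(4) X that by auto
  have "sc r x = (\<Sum>i\<in>S. sc (r * c i) (y i))"
    unfolding S(1) by (simp add: sc_sum y sc_in mult_sc)
  moreover have "(\<lambda>i. r * c i) ` S \<subseteq> a" using S(3) a unfolding r_ideal_def by auto
  ultimately show "sc r x \<in> ideal_smult a X sc" using S(2,4) ideal_smultI by metis
qed

end

lemma hom_in: "f \<in> hom_mod N sc E scE \<Longrightarrow> x \<in> N \<Longrightarrow> f x \<in> E"
  and hom_add: "f \<in> hom_mod N sc E scE \<Longrightarrow> x \<in> N \<Longrightarrow> y \<in> N \<Longrightarrow> f (x + y) = f x + f y"
  and hom_scale: "f \<in> hom_mod N sc E scE \<Longrightarrow> x \<in> N \<Longrightarrow> f (sc r x) = scE r (f x)"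
  and hom_outside: "f \<in> hom_mod N sc E scE \<Longrightarrow> x \<notin> N \<Longrightarrow> f x = 0"
  unfolding hom_mod_def by blast+

lemma hom_zero: "r_module N sc \<Longrightarrow> f \<in> hom_mod N sc E scE \<Longrightarrow> f 0 = 0"
  using hom_add[of f N sc E scE 0 0] rmodule.zero_in[of N sc] by (force simp: rmodule_def)

lemma hom_diff:
  "r_module N sc \<Longrightarrow> f \<in> hom_mod N sc E scE \<Longrightarrow> x \<in> N \<Longrightarrow> y \<in> N \<Longrightarrow> f (x - y) = f x - f y"
  using hom_add[of f N sc E scE "x - y" y] rmodule.diff_in[of N sc x y]
  by (simp add: rmodule_def eq_diff_eq)

lemma hom_sum:
  assumes "r_module N sc" "f \<in> hom_mod N sc E scE" "\<And>i. i \<in> S \<Longrightarrow> g i \<in> N"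
  shows "f (sum g S) = (\<Sum>i\<in>S. f (g i))"
  using assms(3)
proof (induction S rule: infinite_finite_induct)
  case (insert x F)
  then show ?case using assms(1,2) by (simp add: hom_add rmodule.sum_in rmodule_def)
qed (use assms(1,2) hom_zero in auto)

lemma hom_vanishes_on_ideal_smult:
  assumes N: "r_module N sc" and f: "f \<in> hom_mod N sc E scE" and V: "V \<subseteq> N"
    and vanish: "\<forall>r\<in>a. \<forall>v\<in>V. scE r (f v) = 0" and x: "x \<in> ideal_smult a V sc"
  shows "f x = 0"
proof -
  interpret N: rmodule N sc by (rule rmodule.intro) fact
  obtain S :: "nat set" and c y where S: "x = (\<Sum>i\<in>S. sc (c i) (y i))" "c ` S \<subseteq> a" "y ` S \<subseteq> V"
    using x by (rule ideal_smultE)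
  have "f x = (\<Sum>i\<in>S. f (sc (c i) (y i)))"
    unfolding S(1) using S(3) V by (intro hom_sum[OF N f]) (auto intro: N.sc_in)
  also have "\<dots> = 0"
    using S(2,3) V vanish hom_scale[OF f] by (intro sum.neutral) (metis image_subset_iff subsetD)
  finally show ?thesis .
qed

lemma hom_mod_module:
  assumes N: "r_module N sc" and E: "r_module E scE"
  shows "r_module (hom_mod N sc E scE) (hom_sc N scE)"
proof -
  interpret N: rmodule N sc by (rule rmodule.intro) fact
  interpret E: rmodule E scE by (rule rmodule.intro) fact
  show ?thesis
    unfolding r_module_def
  proof (intro conjI ballI allI)
    show "0 \<in> hom_mod N sc E scE" unfolding hom_mod_def using E.zero_in E.sc_zero by simp
    fix f assume f: "f \<in> hom_mod N sc E scE"
    show "- f \<in> hom_mod N sc E scE" unfolding hom_mod_def using f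
      by (auto simp: hom_in hom_add hom_scale hom_outside E.neg_in E.sc_neg)
    fix r show "hom_sc N scE r f \<in> hom_mod N sc E scE" unfolding hom_mod_def hom_sc_def using f
      by (auto simp: hom_in hom_add hom_scale hom_outside E.sc_in N.add_in N.sc_in E.sc_add E.sc_comm)
  next
    fix f g assume f: "f \<in> hom_mod N sc E scE" and g: "g \<in> hom_mod N sc E scE"
    show "f + g \<in> hom_mod N sc E scE" unfolding hom_mod_def using f g
      by (auto simp: hom_in hom_add hom_scale hom_outside E.add_in E.sc_add algebra_simps)
    fix r show "hom_sc N scE r (f + g) = hom_sc N scE r f + hom_sc N scE r g"
      unfolding hom_sc_def using f g by (auto simp: hom_in E.sc_add)
  next
    fix f r s assume f: "f \<in> hom_mod N sc E scE"
    show "hom_sc N scE (r + s) f = hom_sc N scE r f + hom_sc N scE s f"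
      unfolding hom_sc_def using f by (auto simp: hom_in E.add_sc)
    show "hom_sc N scE (r * s) f = hom_sc N scE r (hom_sc N scE s f)"
      unfolding hom_sc_def using f by (auto simp: hom_in E.mult_sc)
  next
    fix f assume f: "f \<in> hom_mod N sc E scE"
    show "hom_sc N scE 1 f = f"
      unfolding hom_sc_def using f by (auto simp: hom_in E.one_sc hom_outside)
  qed
qed

subsection \<open>Extending homomorphisms into an injective module\<close>

definition hom_graph ::
  "'m::ab_group_add set \<Rightarrow> ('r::comm_ring_1 \<Rightarrow> 'm \<Rightarrow> 'm) \<Rightarrow> 'e::ab_group_add set \<Rightarrow> ('r \<Rightarrow> 'e \<Rightarrow> 'e) \<Rightarrow>
   ('m \<times> 'e) set \<Rightarrow> bool" where
  "hom_graph M sc E scE G \<longleftrightarrow> G \<subseteq> M \<times> E \<and> single_valued G \<and>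
     (\<forall>x e y f. (x, e) \<in> G \<longrightarrow> (y, f) \<in> G \<longrightarrow> (x + y, e + f) \<in> G) \<and>
     (\<forall>r x e. (x, e) \<in> G \<longrightarrow> (sc r x, scE r e) \<in> G)"

lemma hom_graphD:
  assumes "hom_graph M sc E scE G"
  shows "G \<subseteq> M \<times> E" and "(x, e) \<in> G \<Longrightarrow> (x, e') \<in> G \<Longrightarrow> e' = e"
    and "(x, e) \<in> G \<Longrightarrow> (y, f) \<in> G \<Longrightarrow> (x + y, e + f) \<in> G"
    and "(x, e) \<in> G \<Longrightarrow> (sc r x, scE r e) \<in> G"
  using assms unfolding hom_graph_def single_valued_def by blast+

lemma hom_graph_Union_chain:
  assumes graphs: "\<And>G. G \<in> C \<Longrightarrow> hom_graph M sc E scE G"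
    and chain: "\<And>G H. G \<in> C \<Longrightarrow> H \<in> C \<Longrightarrow> G \<subseteq> H \<or> H \<subseteq> G"
  shows "hom_graph M sc E scE (\<Union>C)"
proof -
  have common: "\<exists>G\<in>C. p \<in> G \<and> q \<in> G" if "p \<in> \<Union>C" "q \<in> \<Union>C" for p q
    using that chain by blast
  show ?thesis
    unfolding hom_graph_def single_valued_def
  proof (intro conjI allI impI)
    show "\<Union>C \<subseteq> M \<times> E" using graphs hom_graphD(1) by blast
  next
    fix x e e' assume "(x, e) \<in> \<Union>C" "(x, e') \<in> \<Union>C"
    then obtain G where "G \<in> C" "(x, e) \<in> G" "(x, e') \<in> G" using common by blast
    then show "e = e'" using hom_graphD(2)[OF graphs] by blast
  next
    fix x e y f assume "(x, e) \<in> \<Union>C" "(y, f) \<in> \<Union>C"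
    then obtain G where "G \<in> C" "(x, e) \<in> G" "(y, f) \<in> G" using common by blast
    then show "(x + y, e + f) \<in> \<Union>C" using hom_graphD(3)[OF graphs] by blast
  next
    fix r x e assume "(x, e) \<in> \<Union>C"
    then show "(sc r x, scE r e) \<in> \<Union>C" using graphs hom_graphD(4) by blast
  qed
qed

lemma hom_graph_zero:
  assumes M: "r_module M sc" and E: "r_module E scE"
    and G: "hom_graph M sc E scE G" "G \<noteq> {}"
  shows "(0, 0) \<in> G"
proof -
  obtain x e where xe: "(x, e) \<in> G" using G(2) by auto
  then have "x \<in> M" "e \<in> E" using hom_graphD(1)[OF G(1)] by auto
  then show ?thesis
    using hom_graphD(4)[OF G(1) xe, of 0] rmodule.zero_sc[OF rmodule.intro, OF M] rmodule.zero_sc[OF rmodule.intro, OF E]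
    by simp
qed

definition adjoin_graph ::
  "('r \<Rightarrow> 'm \<Rightarrow> 'm) \<Rightarrow> ('r \<Rightarrow> 'e \<Rightarrow> 'e) \<Rightarrow> ('m::plus \<times> 'e::plus) set \<Rightarrow> 'm \<Rightarrow> 'e \<Rightarrow> ('m \<times> 'e) set" where
  "adjoin_graph sc scE G y e = {(d + sc r y, a + scE r e) | d a r. (d, a) \<in> G}"

lemma single_valued_adjoin_graph:
  assumes M: "r_module M sc" and E: "r_module E scE" and G: "hom_graph M sc E scE G"
    and y: "y \<in> M" and e: "e \<in> E"
    and compatible: "\<And>r a. (sc r y, a) \<in> G \<Longrightarrow> a = scE r e"
  shows "single_valued (adjoin_graph sc scE G y e)"
  unfolding single_valued_def
proof (intro allI impI)
  interpret M: rmodule M sc by (rule rmodule.intro) fact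
  interpret E: rmodule E scE by (rule rmodule.intro) fact
  fix x p q assume "(x, p) \<in> adjoin_graph sc scE G y e" "(x, q) \<in> adjoin_graph sc scE G y e"
  then obtain d1 a1 r1 d2 a2 r2 where h: "(d1, a1) \<in> G" "(d2, a2) \<in> G"
    "x = d1 + sc r1 y" "p = a1 + scE r1 e" "x = d2 + sc r2 y" "q = a2 + scE r2 e"
    unfolding adjoin_graph_def by blast
  have "(d2 - d1, a2 - a1) \<in> G"
    using hom_graphD(3)[OF G h(2) hom_graphD(4)[OF G h(1), of "- 1"]] h(1) hom_graphD(1)[OF G]
      M.neg_sc E.neg_sc M.one_sc E.one_sc
    by (auto simp: subset_iff)
  moreover have "sc (r1 - r2) y = d2 - d1"
  proof -
    have "d1 + sc r1 y = d2 + sc r2 y" using h(3,5) by simp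
    then have "sc r1 y - sc r2 y = d2 - d1" by (simp add: algebra_simps)
    then show ?thesis using M.diff_sc[OF y] by simp
  qed
  ultimately have "a2 - a1 = scE (r1 - r2) e" using compatible by simp
  then show "p = q" using h(4,6) E.diff_sc[OF e] by (simp add: algebra_simps)
qed

lemma hom_graph_adjoin_graph:
  assumes M: "r_module M sc" and E: "r_module E scE" and G: "hom_graph M sc E scE G"
    and y: "y \<in> M" and e: "e \<in> E"
    and compatible: "\<And>r a. (sc r y, a) \<in> G \<Longrightarrow> a = scE r e"
  shows "hom_graph M sc E scE (adjoin_graph sc scE G y e)"
  unfolding hom_graph_def
proof (intro conjI allI impI single_valued_adjoin_graph[OF assms])
  interpret M: rmodule M sc by (rule rmodule.intro) fact
  interpret E: rmodule E scE by (rule rmodule.intro) fact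
  note sub = hom_graphD(1)[OF G]
  show "adjoin_graph sc scE G y e \<subseteq> M \<times> E" using sub y e unfolding adjoin_graph_def
    by (auto intro!: M.add_in E.add_in M.sc_in E.sc_in)
next
  fix x p z q assume "(x, p) \<in> adjoin_graph sc scE G y e" "(z, q) \<in> adjoin_graph sc scE G y e"
  then obtain d1 a1 r1 d2 a2 r2 where h: "(d1, a1) \<in> G" "(d2, a2) \<in> G"
    "x = d1 + sc r1 y" "p = a1 + scE r1 e" "z = d2 + sc r2 y" "q = a2 + scE r2 e"
    unfolding adjoin_graph_def by blast
  have "x + z = (d1 + d2) + sc (r1 + r2) y" "p + q = (a1 + a2) + scE (r1 + r2) e"
    using h rmodule.add_sc[OF rmodule.intro, OF M y] rmodule.add_sc[OF rmodule.intro, OF E e]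
    by (simp_all add: algebra_simps)
  then show "(x + z, p + q) \<in> adjoin_graph sc scE G y e"
    unfolding adjoin_graph_def using hom_graphD(3)[OF G h(1,2)] by blast
next
  interpret M: rmodule M sc by (rule rmodule.intro) fact
  interpret E: rmodule E scE by (rule rmodule.intro) fact
  fix s x p assume "(x, p) \<in> adjoin_graph sc scE G y e"
  then obtain d a r where h: "(d, a) \<in> G" "x = d + sc r y" "p = a + scE r e"
    unfolding adjoin_graph_def by blast
  have "d \<in> M" "a \<in> E" using h(1) hom_graphD(1)[OF G] by auto
  then have "sc s x = sc s d + sc (s * r) y" "scE s p = scE s a + scE (s * r) e"
    using h y e by (simp_all add: M.sc_add E.sc_add M.sc_in E.sc_in M.mult_sc E.mult_sc)
  then show "(sc s x, scE s p) \<in> adjoin_graph sc scE G y e"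
    unfolding adjoin_graph_def using hom_graphD(4)[OF G h(1)] by blast
qed

lemma adjoin_graph_extends:
  assumes M: "r_module M sc" and E: "r_module E scE" and G0: "(0, 0) \<in> G" and y: "y \<in> M" and e: "e \<in> E"
  shows "G \<subseteq> adjoin_graph sc scE G y e" and "(y, e) \<in> adjoin_graph sc scE G y e"
proof -
  interpret M: rmodule M sc by (rule rmodule.intro) fact
  interpret E: rmodule E scE by (rule rmodule.intro) fact
  show "G \<subseteq> adjoin_graph sc scE G y e"
  proof (rule subrelI)
    fix d a assume "(d, a) \<in> G"
    then have "(d + sc 0 y, a + scE 0 e) \<in> adjoin_graph sc scE G y e" unfolding adjoin_graph_def by blast
    then show "(d, a) \<in> adjoin_graph sc scE G y e" using M.zero_sc[OF y] E.zero_sc[OF e] by simp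
  qed
  have "(0 + sc 1 y, 0 + scE 1 e) \<in> adjoin_graph sc scE G y e" unfolding adjoin_graph_def using G0 by blast
  then show "(y, e) \<in> adjoin_graph sc scE G y e" using M.one_sc[OF y] E.one_sc[OF e] by simp
qed

lemma hom_graph_pullback:
  assumes M: "r_module M sc" and G: "hom_graph M sc E scE G" and y: "y \<in> M"
  shows "hom_graph UNIV (*) E scE {(r, a). (sc r y, a) \<in> G}"
  unfolding hom_graph_def single_valued_def
proof (intro conjI allI impI)
  interpret M: rmodule M sc by (rule rmodule.intro) fact
  show "{(r, a). (sc r y, a) \<in> G} \<subseteq> UNIV \<times> E" using hom_graphD(1)[OF G] by blast
  fix r a b assume "(r, a) \<in> {(r, a). (sc r y, a) \<in> G}" "(r, b) \<in> {(r, a). (sc r y, a) \<in> G}"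
  then show "a = b" using hom_graphD(2)[OF G] by blast
next
  interpret M: rmodule M sc by (rule rmodule.intro) fact
  fix r a s b assume "(r, a) \<in> {(r, a). (sc r y, a) \<in> G}" "(s, b) \<in> {(r, a). (sc r y, a) \<in> G}"
  then have "(sc r y + sc s y, a + b) \<in> G" using hom_graphD(3)[OF G] by blast
  then show "(r + s, a + b) \<in> {(r, a). (sc r y, a) \<in> G}" by (simp add: M.add_sc[OF y])
next
  interpret M: rmodule M sc by (rule rmodule.intro) fact
  fix s r a assume "(r, a) \<in> {(r, a). (sc r y, a) \<in> G}"
  then have "(sc s (sc r y), scE s a) \<in> G" using hom_graphD(4)[OF G] by blast
  then show "(s * r, scE s a) \<in> {(r, a). (sc r y, a) \<in> G}" by (simp add: M.mult_sc[OF y])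
qed

lemma injective_module_hom_graph:
  assumes inj: "injective_module E scE" and K: "hom_graph UNIV (*) E scE K" and K0: "(0, 0) \<in> K"
  shows "\<exists>e\<in>E. \<forall>r a. (r, a) \<in> K \<longrightarrow> a = scE r e"
proof -
  note unique = hom_graphD(2)[OF K]
  define k where "k r = (THE a. (r, a) \<in> K)" for r
  have k_eq: "k r = a" if "(r, a) \<in> K" for r a
    unfolding k_def by (rule the_equality) (use that unique in blast)+
  have K_k: "(r, k r) \<in> K" if r: "r \<in> Domain K" for r
  proof -
    obtain a where "(r, a) \<in> K" using r by blast
    then show ?thesis using k_eq by simp
  qed
  have add: "(r + s, k r + k s) \<in> K" if "r \<in> Domain K" "s \<in> Domain K" for r s
    using hom_graphD(3)[OF K K_k[OF that(1)] K_k[OF that(2)]] .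
  have mult: "(s * r, scE s (k r)) \<in> K" if "r \<in> Domain K" for r s
    using hom_graphD(4)[OF K K_k[OF that]] by simp
  have "r_ideal (Domain K)" unfolding r_ideal_def using K0 add mult by blast
  moreover have "\<forall>r\<in>Domain K. k r \<in> E" using K_k hom_graphD(1)[OF K] by blast
  moreover have "\<forall>r\<in>Domain K. \<forall>s\<in>Domain K. k (r + s) = k r + k s" using add k_eq by blast
  moreover have "\<forall>s. \<forall>r\<in>Domain K. k (s * r) = scE s (k r)" using mult k_eq by blast
  ultimately obtain e where e: "e \<in> E" "\<And>r. r \<in> Domain K \<Longrightarrow> k r = scE r e"
    using inj[unfolded injective_module_def, rule_format, of "Domain K" k] by blast
  have "a = scE r e" if "(r, a) \<in> K" for r a
    using e(2) k_eq[OF that] that by blast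
  then show ?thesis using e(1) by blast
qed

text \<open>Pulling G back along r \<mapsto> r y gives a partial map on an ideal of R; by Baer's criterion it is
  r \<mapsto> r e for some e, so (y, e) can be adjoined to G.\<close>

lemma maximal_hom_graph_total:
  assumes M: "r_module M sc" and E: "r_module E scE" and inj: "injective_module E scE"
    and G: "hom_graph M sc E scE G" and G0: "(0, 0) \<in> G"
    and maximal: "\<And>G'. hom_graph M sc E scE G' \<Longrightarrow> G \<subseteq> G' \<Longrightarrow> G' = G"
  shows "Domain G = M"
proof (rule ccontr)
  assume "Domain G \<noteq> M"
  then obtain y where y: "y \<in> M" "y \<notin> Domain G" using hom_graphD(1)[OF G] by auto
  have "(0, 0) \<in> {(r, a). (sc r y, a) \<in> G}" using G0 rmodule.zero_sc[OF rmodule.intro, OF M y(1)] by simp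
  then obtain e where e: "e \<in> E" "\<And>r a. (sc r y, a) \<in> G \<Longrightarrow> a = scE r e"
    using injective_module_hom_graph[OF inj hom_graph_pullback[OF M G y(1)]] by auto
  note adjoin = hom_graph_adjoin_graph[OF M E G y(1) e] adjoin_graph_extends[OF M E G0 y(1) e(1)]
  then show False using maximal[OF adjoin(1,2)] y(2) by blast
qed

lemma hom_of_total_graph:
  assumes G: "hom_graph M sc E scE G" and total: "Domain G = M"
  shows "\<exists>H\<in>hom_mod M sc E scE. \<forall>(x, e)\<in>G. H x = e"
proof -
  note unique = hom_graphD(2)[OF G]
  define H where "H x = (if x \<in> M then THE e. (x, e) \<in> G else 0)" for x
  have H_eq: "H x = e" if "(x, e) \<in> G" for x e
  proof -
    have "x \<in> M" using that hom_graphD(1)[OF G] by blast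
    moreover have "(THE e. (x, e) \<in> G) = e" by (rule the_equality) (use that unique in blast)+
    ultimately show ?thesis by (simp add: H_def)
  qed
  have graph: "(x, H x) \<in> G" if "x \<in> M" for x
  proof -
    have "x \<in> Domain G" using that total by simp
    then obtain e where "(x, e) \<in> G" by blast
    then show ?thesis using H_eq by simp
  qed
  have "H \<in> hom_mod M sc E scE"
    unfolding hom_mod_def
  proof (intro CollectI conjI ballI allI impI)
    fix x assume x: "x \<in> M"
    show "H x \<in> E" using graph[OF x] hom_graphD(1)[OF G] by blast
    fix r show "H (sc r x) = scE r (H x)" using H_eq[OF hom_graphD(4)[OF G graph[OF x]]] .
  next
    fix x y assume "x \<in> M" "y \<in> M"
    then show "H (x + y) = H x + H y" using H_eq[OF hom_graphD(3)[OF G graph graph]] by blast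
  next
    fix x assume "x \<notin> M"
    then show "H x = 0" by (simp add: H_def)
  qed
  then show ?thesis using H_eq by blast
qed

lemma hom_graph_extends_to_hom:
  assumes M: "r_module M sc" and E: "r_module E scE" and inj: "injective_module E scE"
    and G0: "hom_graph M sc E scE G0" "G0 \<noteq> {}"
  shows "\<exists>H\<in>hom_mod M sc E scE. \<forall>(x, e)\<in>G0. H x = e"
proof -
  define A where "A = {G. hom_graph M sc E scE G \<and> G0 \<subseteq> G}"
  have "\<forall>C\<in>chains A. \<exists>U\<in>A. \<forall>X\<in>C. X \<subseteq> U"
  proof
    fix C assume C: "C \<in> chains A"
    show "\<exists>U\<in>A. \<forall>X\<in>C. X \<subseteq> U"
    proof (cases "C = {}")
      case True
      moreover have "G0 \<in> A" using G0(1) by (simp add: A_def)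
      ultimately show ?thesis by blast
    next
      case False
      have "C \<subseteq> A" "chain\<^sub>\<subseteq> C" using C unfolding chains_def by auto
      then have "hom_graph M sc E scE (\<Union>C)"
        by (intro hom_graph_Union_chain) (auto simp: A_def chain_subset_def)
      moreover have "G0 \<subseteq> \<Union>C" using \<open>C \<subseteq> A\<close> False by (auto simp: A_def)
      ultimately have "\<Union>C \<in> A" by (simp add: A_def)
      then show ?thesis by blast
    qed
  qed
  then obtain G where "G \<in> A" and maximal: "\<forall>G'\<in>A. G \<subseteq> G' \<longrightarrow> G' = G"
    by (rule Zorn_Lemma2[THEN bexE])
  then have G: "hom_graph M sc E scE G" "G0 \<subseteq> G" unfolding A_def by blast+
  have "G \<noteq> {}" using G0(2) G(2) by blast
  then have "(0, 0) \<in> G" by (rule hom_graph_zero[OF M E G(1)])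
  moreover have "G' = G" if "hom_graph M sc E scE G'" "G \<subseteq> G'" for G'
  proof -
    have "G' \<in> A" using that G(2) unfolding A_def by blast
    then show ?thesis using maximal that(2) by blast
  qed
  ultimately have "Domain G = M" by (rule maximal_hom_graph_total[OF M E inj G(1)])
  then obtain H where H: "H \<in> hom_mod M sc E scE" "\<forall>(x, e)\<in>G. H x = e"
    using hom_of_total_graph[OF G(1)] by blast
  have "\<forall>(x, e)\<in>G0. H x = e" using H(2) G(2) by auto
  with H(1) show ?thesis by blast
qed

lemma hom_graph_factor:
  assumes N: "r_module N scN" and M: "r_module M sc" and Q: "submodule M sc Q"
    and t: "t \<in> hom_mod N scN M sc" and f: "f \<in> hom_mod N scN E scE"
    and kernel: "\<And>x. x \<in> N \<Longrightarrow> t x \<in> Q \<Longrightarrow> f x = 0"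
  shows "hom_graph M sc E scE {(t x + q, f x) | x q. x \<in> N \<and> q \<in> Q}" (is "hom_graph _ _ _ _ ?G")
  unfolding hom_graph_def single_valued_def
proof (intro conjI allI impI)
  interpret N: rmodule N scN by (rule rmodule.intro) fact
  interpret M: rmodule M sc by (rule rmodule.intro) fact
  show "?G \<subseteq> M \<times> E" using submodule_subset[OF Q] hom_in[OF t] hom_in[OF f] by (auto intro: M.add_in)
  fix z p p' assume "(z, p) \<in> ?G" "(z, p') \<in> ?G"
  then obtain x q x' q' where h: "x \<in> N" "q \<in> Q" "x' \<in> N" "q' \<in> Q"
    "z = t x + q" "p = f x" "z = t x' + q'" "p' = f x'" by blast
  have "t x + q = t x' + q'" using h(5,7) by simp
  then have "t x - t x' = q' - q" by (simp add: algebra_simps)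
  then have "t (x - x') = q' - q" using hom_diff[OF N t h(1,3)] by simp
  then have "f (x - x') = 0" using kernel N.diff_in[OF h(1,3)] M.submodule_diff[OF Q h(4,2)] by simp
  then show "p = p'" using h hom_diff[OF N f h(1,3)] by simp
next
  interpret N: rmodule N scN by (rule rmodule.intro) fact
  fix z p z' p' assume "(z, p) \<in> ?G" "(z', p') \<in> ?G"
  then obtain x q x' q' where h: "x \<in> N" "q \<in> Q" "x' \<in> N" "q' \<in> Q"
    "z = t x + q" "p = f x" "z' = t x' + q'" "p' = f x'" by blast
  have "z + z' = t (x + x') + (q + q')" "p + p' = f (x + x')"
    using h hom_add[OF t] hom_add[OF f] by (simp_all add: algebra_simps)
  moreover have "q + q' \<in> Q" using Q h(2,4) unfolding submodule_def by blast
  ultimately show "(z + z', p + p') \<in> ?G" using N.add_in[OF h(1,3)] by blast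
next
  interpret N: rmodule N scN by (rule rmodule.intro) fact
  interpret M: rmodule M sc by (rule rmodule.intro) fact
  fix r z p assume "(z, p) \<in> ?G"
  then obtain x q where h: "x \<in> N" "q \<in> Q" "z = t x + q" "p = f x" by blast
  have "sc r z = t (scN r x) + sc r q" "scE r p = f (scN r x)"
    using h submodule_subset[OF Q] hom_in[OF t] M.sc_add hom_scale[OF t] hom_scale[OF f] by auto
  moreover have "sc r q \<in> Q" using Q h(2) unfolding submodule_def by blast
  ultimately show "(sc r z, scE r p) \<in> ?G" using N.sc_in[OF h(1)] by blast
qed

lemma hom_extends_along:
  assumes N: "r_module N scN" and M: "r_module M sc" and E: "r_module E scE"
    and inj: "injective_module E scE" and Q: "submodule M sc Q"
    and t: "t \<in> hom_mod N scN M sc" and f: "f \<in> hom_mod N scN E scE"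
    and kernel: "\<And>x. x \<in> N \<Longrightarrow> t x \<in> Q \<Longrightarrow> f x = 0"
  shows "\<exists>H\<in>hom_mod M sc E scE. (\<forall>x\<in>N. H (t x) = f x) \<and> (\<forall>q\<in>Q. H q = 0)"
proof -
  let ?G = "{(t x + q, f x) | x q. x \<in> N \<and> q \<in> Q}"
  have zero: "0 \<in> N" "0 \<in> Q" using N Q unfolding r_module_def submodule_def by blast+
  then have "?G \<noteq> {}" by blast
  then obtain H where H: "H \<in> hom_mod M sc E scE" "\<forall>(z, e)\<in>?G. H z = e"
    using hom_graph_extends_to_hom[OF M E inj hom_graph_factor[OF N M Q t f kernel]] by blast
  have H_G: "H (t x + q) = f x" if "x \<in> N" "q \<in> Q" for x q
  proof -
    have "(t x + q, f x) \<in> ?G" using that by blast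
    from bspec[OF H(2) this] show ?thesis by simp
  qed
  have "H (t x) = f x" if "x \<in> N" for x using H_G[OF that zero(2)] by simp
  moreover have "H q = 0" if "q \<in> Q" for q
    using H_G[OF zero(1) that] hom_zero[OF N t] hom_zero[OF N f] by simp
  ultimately show ?thesis using H(1) by blast
qed

lemma hom_separates_from_submodule:
  assumes M: "r_module M sc" and local: "local_ring_max m" and hull: "injective_hull_residue m E scE"
    and U: "submodule M sc U" and x: "x \<in> M" "x \<notin> U"
  shows "\<exists>f\<in>hom_mod M sc E scE. (\<forall>u\<in>U. f u = 0) \<and> f x \<noteq> 0"
proof -
  interpret M: rmodule M sc by (rule rmodule.intro) fact
  have E: "r_module E scE" and inj: "injective_module E scE"
    using hull unfolding injective_hull_residue_def by blast+
  obtain g where g: "\<And>r. g r \<in> E" "\<And>r s. g (r + s) = g r + g s" "\<And>r s. g (r * s) = scE r (g s)"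
    and ker_g: "{r. g r = 0} = m"
    using hull unfolding injective_hull_residue_def by blast
  have g_hom: "g \<in> hom_mod UNIV (*) E scE" unfolding hom_mod_def using g by simp
  define t where "t r = sc r x" for r
  have t_hom: "t \<in> hom_mod UNIV (*) M sc"
    unfolding hom_mod_def t_def using x(1) M.sc_in M.add_sc M.mult_sc by simp
  have "g r = 0" if "t r \<in> U" for r
  proof -
    \<comment> \<open>the annihilator of x modulo U is a proper ideal, hence contained in m, the kernel of g\<close>
    define J where "J = {s. sc s x \<in> U}"
    have "r_ideal J"
      unfolding r_ideal_def J_def using U M.zero_sc[OF x(1)] M.add_sc[OF x(1)] M.mult_sc[OF x(1)]
      by (auto simp: submodule_def)
    moreover have "1 \<notin> J" using x M.one_sc[OF x(1)] unfolding J_def by simp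
    then have "J \<noteq> UNIV" by blast
    ultimately have "J \<subseteq> m" using local unfolding local_ring_max_def by blast
    then show ?thesis using that ker_g unfolding t_def J_def by blast
  qed
  then obtain H where H: "H \<in> hom_mod M sc E scE" "\<forall>r. H (t r) = g r" "\<forall>u\<in>U. H u = 0"
    using hom_extends_along[OF r_module_ring M E inj U t_hom g_hom] by auto
  have "H x = g 1" using H(2) M.one_sc[OF x(1)] unfolding t_def by metis
  moreover have "1 \<notin> m"
    using local unfolding local_ring_max_def r_ideal_def by (metis UNIV_eq_I mult.right_neutral)
  ultimately show ?thesis using H(1,3) ker_g by auto
qed

subsection \<open>Finitely generated ideals and finite powers of a module\<close>

lemma generator_in_gen_ideal: "g \<in> G \<Longrightarrow> g \<in> gen_ideal G"
  unfolding gen_ideal_def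
  by (rule CollectI, rule exI[of _ "{0::nat}"], rule exI[of _ "\<lambda>_. 1"], rule exI[of _ "\<lambda>_. g"]) simp

lemma (in rmodule) gen_ideal_sc_in_submodule:
  assumes U: "submodule M sc U" and x: "x \<in> M" and G: "\<forall>g\<in>G. sc g x \<in> U"
    and r: "r \<in> gen_ideal G"
  shows "sc r x \<in> U"
proof -
  obtain S :: "nat set" and c g where r_sum: "r = (\<Sum>i\<in>S. c i * g i)" and "g ` S \<subseteq> G"
    using r unfolding gen_ideal_def by blast
  have "sc r x = (\<Sum>i\<in>S. sc (c i) (sc (g i) x))"
    unfolding r_sum sum_sc[OF x] by (simp add: mult_sc[OF x])
  also have "\<dots> \<in> U"
    by (rule submodule_sum[OF U]) (use \<open>g ` S \<subseteq> G\<close> G U in \<open>auto simp: submodule_def\<close>)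
  finally show ?thesis .
qed

lemma ideal_smult_sum:
  assumes "finite G" "G \<subseteq> a" "\<And>g. g \<in> G \<Longrightarrow> k g \<in> X"
  shows "(\<Sum>g\<in>G. sc g (k g)) \<in> ideal_smult a X sc"
proof -
  obtain h where h: "bij_betw h {0..<card G} G" using ex_bij_betw_nat_finite[OF assms(1)] by blast
  then have "(\<Sum>g\<in>G. sc g (k g)) = (\<Sum>i\<in>{0..<card G}. sc (h i) (k (h i)))"
    using sum.reindex_bij_betw[OF h, of "\<lambda>g. sc g (k g)"] by simp
  moreover have "h ` {0..<card G} \<subseteq> a" "(\<lambda>i. k (h i)) ` {0..<card G} \<subseteq> X"
    using h assms(2,3) by (auto simp: bij_betw_def)
  ultimately show ?thesis using ideal_smultI[of "{0..<card G}" h a "\<lambda>i. k (h i)" X sc] by simp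
qed

definition power_module :: "'i set \<Rightarrow> 'm::zero set \<Rightarrow> ('i \<Rightarrow> 'm) set" where
  "power_module G N = {v. \<forall>i. (i \<in> G \<longrightarrow> v i \<in> N) \<and> (i \<notin> G \<longrightarrow> v i = 0)}"

definition power_sc :: "('r \<Rightarrow> 'm \<Rightarrow> 'm) \<Rightarrow> 'r \<Rightarrow> ('i \<Rightarrow> 'm) \<Rightarrow> 'i \<Rightarrow> 'm" where
  "power_sc sc r v = (\<lambda>i. sc r (v i))"

definition power_component :: "'m::zero set \<Rightarrow> (('i \<Rightarrow> 'm) \<Rightarrow> 'e::zero) \<Rightarrow> 'i \<Rightarrow> 'm \<Rightarrow> 'e" where
  "power_component M H i y = (if y \<in> M then H (0(i := y)) else 0)"

lemma fun_upd_in_power_module: "0 \<in> M \<Longrightarrow> i \<in> G \<Longrightarrow> y \<in> M \<Longrightarrow> 0(i := y) \<in> power_module G M"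
  unfolding power_module_def by auto

lemma sum_apply: "sum F S x = (\<Sum>i\<in>S. F i x)"
  by (induction S rule: infinite_finite_induct) auto

context rmodule
begin

lemma power_module_in: "v \<in> power_module G M \<Longrightarrow> v i \<in> M"
  unfolding power_module_def using zero_in by (cases "i \<in> G") auto

lemma power_module_module: "r_module (power_module G M) (power_sc sc)"
proof -
  have closed: "0 \<in> power_module G M"
    "\<And>v w. v \<in> power_module G M \<Longrightarrow> w \<in> power_module G M \<Longrightarrow> v + w \<in> power_module G M"
    "\<And>v. v \<in> power_module G M \<Longrightarrow> - v \<in> power_module G M"
    "\<And>r v. v \<in> power_module G M \<Longrightarrow> power_sc sc r v \<in> power_module G M"
    by (auto simp: power_module_def power_sc_def zero_in add_in neg_in sc_in sc_zero)
  then show ?thesis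
    unfolding r_module_def
    by (auto simp: power_sc_def fun_eq_iff power_module_in sc_add add_sc mult_sc one_sc)
qed

lemma power_module_submodule:
  assumes "submodule M sc U"
  shows "submodule (power_module G M) (power_sc sc) (power_module G U)"
  using assms unfolding submodule_def power_module_def power_sc_def by (auto simp: sc_zero)

lemma power_module_sum_fun_upd:
  assumes "finite G" "v \<in> power_module G M"
  shows "v = (\<Sum>i\<in>G. 0(i := v i))"
  using assms by (auto simp: fun_eq_iff sum_apply power_module_def sum.delta' cong: if_cong)

lemma hom_power_module_sum:
  assumes "finite G" and H: "H \<in> hom_mod (power_module G M) (power_sc sc) E scE"
    and v: "v \<in> power_module G M"
  shows "H v = (\<Sum>i\<in>G. H (0(i := v i)))"
proof -
  have "H v = H (\<Sum>i\<in>G. 0(i := v i))" using power_module_sum_fun_upd[OF assms(1) v] by simp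
  also have "\<dots> = (\<Sum>i\<in>G. H (0(i := v i)))"
    using v by (intro hom_sum[OF power_module_module H]) (auto intro: fun_upd_in_power_module zero_in power_module_in)
  finally show ?thesis .
qed

lemma hom_power_component:
  assumes H: "H \<in> hom_mod (power_module G M) (power_sc sc) E scE" and i: "i \<in> G"
  shows "power_component M H i \<in> hom_mod M sc E scE"
  unfolding hom_mod_def power_component_def
proof (intro CollectI conjI ballI allI impI)
  fix x assume x: "x \<in> M"
  show "(if x \<in> M then H (0(i := x)) else 0) \<in> E"
    using x hom_in[OF H fun_upd_in_power_module[OF zero_in i x]] by simp
  fix r
  have "0(i := sc r x) = power_sc sc r (0(i := x))" by (auto simp: power_sc_def fun_eq_iff sc_zero)
  then show "(if sc r x \<in> M then H (0(i := sc r x)) else 0) = scE r (if x \<in> M then H (0(i := x)) else 0)"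
    using x sc_in[OF x] hom_scale[OF H fun_upd_in_power_module[OF zero_in i x]] by simp
next
  fix x y assume xy: "x \<in> M" "y \<in> M"
  have "0(i := x + y) = 0(i := x) + 0(i := y)" by (auto simp: fun_eq_iff)
  then show "(if x + y \<in> M then H (0(i := x + y)) else 0)
      = (if x \<in> M then H (0(i := x)) else 0) + (if y \<in> M then H (0(i := y)) else 0)"
    using xy add_in[OF xy] hom_add[OF H fun_upd_in_power_module[OF zero_in i] fun_upd_in_power_module[OF zero_in i]] by simp
qed simp

lemma hom_through_diagonal:
  assumes G: "finite G" and H: "H \<in> hom_mod (power_module G M) (power_sc sc) E scE"
    and f: "f \<in> hom_mod M sc E scE"
    and f_H: "\<And>x. x \<in> M \<Longrightarrow> f x = H (\<lambda>g. if g \<in> G then sc g x else 0)"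
  shows "f = (\<Sum>g\<in>G. hom_sc M scE g (power_component M H g))"
proof
  fix x
  show "f x = (\<Sum>g\<in>G. hom_sc M scE g (power_component M H g)) x"
  proof (cases "x \<in> M")
    case x: True
    have "(\<lambda>g. if g \<in> G then sc g x else 0) \<in> power_module G M"
      using x by (auto simp: power_module_def sc_in)
    then have "f x = (\<Sum>g\<in>G. H (0(g := if g \<in> G then sc g x else 0)))"
      using f_H[OF x] hom_power_module_sum[OF G H] by simp
    also have "\<dots> = (\<Sum>g\<in>G. power_component M H g (sc g x))"
      using x by (intro sum.cong) (auto simp: power_component_def sc_in)
    also have "\<dots> = (\<Sum>g\<in>G. scE g (power_component M H g x))"
      using hom_power_component[OF H] hom_scale x by (intro sum.cong) blast+
    finally show ?thesis using x by (simp add: sum_apply hom_sc_def)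
  qed (simp add: hom_outside[OF f] sum_apply hom_sc_def)
qed

end

text \<open>
  If a = (g_1, ..., g_n) and N/U has no a-torsion, then x \<mapsto> (g_1 x, ..., g_n x) embeds N/U into
  (N/U)^n, so f extends to a map N^n \<rightarrow> E, whose components k_i give f = \<Sum> g_i k_i.\<close>

lemma vanishing_hom_in_ideal_smult:
  assumes noeth: "noetherian_ring TYPE('r::comm_ring_1)" and a: "r_ideal (a :: 'r set)"
    and N: "r_module N scN" and E: "r_module E scE" and inj: "injective_module E scE"
    and U: "submodule N scN U" and no_torsion: "\<And>x. x \<in> N \<Longrightarrow> \<forall>r\<in>a. scN r x \<in> U \<Longrightarrow> x \<in> U"
    and f: "f \<in> hom_mod N scN E scE" and f_U: "\<forall>u\<in>U. f u = 0"
  shows "f \<in> ideal_smult a {h \<in> hom_mod N scN E scE. \<forall>u\<in>U. h u = 0} (hom_sc N scE)"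
proof -
  interpret N: rmodule N scN by (rule rmodule.intro) fact
  obtain G where G: "finite G" "a = gen_ideal G" using noeth a unfolding noetherian_ring_def by blast
  have G_a: "G \<subseteq> a" unfolding G(2) using generator_in_gen_ideal by blast
  define t where "t x = (if x \<in> N then (\<lambda>g. if g \<in> G then scN g x else 0) else 0)" for x
  have t_hom: "t \<in> hom_mod N scN (power_module G N) (power_sc scN)"
    unfolding hom_mod_def t_def
    by (auto simp: power_module_def power_sc_def fun_eq_iff N.sc_in N.add_in N.sc_add N.sc_zero N.sc_comm)
  have "f x = 0" if x: "x \<in> N" and "t x \<in> power_module G U" for x
  proof -
    have "\<forall>g\<in>G. scN g x \<in> U" using that unfolding t_def power_module_def by auto
    then have "x \<in> U" using no_torsion[OF x] N.gen_ideal_sc_in_submodule[OF U x] G(2) by blast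
    then show ?thesis using f_U by blast
  qed
  then obtain H where H: "H \<in> hom_mod (power_module G N) (power_sc scN) E scE"
    "\<forall>x\<in>N. H (t x) = f x" "\<forall>v\<in>power_module G U. H v = 0"
    using hom_extends_along[OF N N.power_module_module E inj N.power_module_submodule[OF U] t_hom f]
    by blast
  have components: "power_component N H g \<in> {h \<in> hom_mod N scN E scE. \<forall>u\<in>U. h u = 0}"
    if g: "g \<in> G" for g
  proof -
    have "power_component N H g u = 0" if "u \<in> U" for u
    proof -
      have "u \<in> N" "0 \<in> U" using that U unfolding submodule_def by blast+
      then show ?thesis using that H(3) fun_upd_in_power_module[of U g G u] g by (simp add: power_component_def)
    qed
    then show ?thesis using N.hom_power_component[OF H(1) g] by blast
  qed
  have "f = (\<Sum>g\<in>G. hom_sc N scE g (power_component N H g))"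
    using H(2) by (intro N.hom_through_diagonal[OF G(1) H(1) f]) (simp add: t_def)
  then show ?thesis using ideal_smult_sum[OF G(1) G_a components] by simp
qed

lemma (in rmodule) F_torsion_free_iff_quotient_zero:
  "F_torsion_free F M sc \<longleftrightarrow> quotient_F_torsion_free F M sc {0}"
  unfolding F_torsion_free_def quotient_F_torsion_free_def annihilated_def
  using zero_in sc_zero by auto

subsection \<open>Duality between submodules of N and of its dual\<close>

locale hom_dual =
  fixes N :: "'n::ab_group_add set" and scN :: "'r::comm_ring_1 \<Rightarrow> 'n \<Rightarrow> 'n"
    and E :: "'e::ab_group_add set" and scE :: "'r \<Rightarrow> 'e \<Rightarrow> 'e"
  assumes module_N: "r_module N scN" and module_E: "r_module E scE"
begin

abbreviation dual :: "('n \<Rightarrow> 'e) set" where "dual \<equiv> hom_mod N scN E scE"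
abbreviation dual_sc :: "'r \<Rightarrow> ('n \<Rightarrow> 'e) \<Rightarrow> 'n \<Rightarrow> 'e" where "dual_sc \<equiv> hom_sc N scE"

sublocale N: rmodule N scN by (rule rmodule.intro) (rule module_N)
sublocale E: rmodule E scE by (rule rmodule.intro) (rule module_E)
sublocale D: rmodule dual dual_sc by (rule rmodule.intro) (rule hom_mod_module[OF module_N module_E])

definition vanishing_homs :: "'n set \<Rightarrow> ('n \<Rightarrow> 'e) set" where
  "vanishing_homs U = {f \<in> dual. \<forall>u\<in>U. f u = 0}"

definition common_zeros :: "('n \<Rightarrow> 'e) set \<Rightarrow> 'n set" where
  "common_zeros W = {x \<in> N. \<forall>g\<in>W. g x = 0}"

definition evaluation :: "'n \<Rightarrow> ('n \<Rightarrow> 'e) \<Rightarrow> 'e" where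
  "evaluation x = (\<lambda>f. if f \<in> dual then f x else 0)"

lemma vanishing_homs_submodule: "submodule dual dual_sc (vanishing_homs U)"
  unfolding submodule_def vanishing_homs_def
  using D.zero_in D.add_in D.sc_in E.sc_zero by (auto simp: hom_sc_def)

lemma common_zeros_submodule:
  assumes "W \<subseteq> dual"
  shows "submodule N scN (common_zeros W)"
proof -
  have "g (x + y) = 0" if "g \<in> W" "x \<in> N" "y \<in> N" "g x = 0" "g y = 0" for g x y
  proof -
    have "g \<in> dual" using that(1) assms by blast
    then show ?thesis using hom_add that(2-5) by fastforce
  qed
  moreover have "g (scN r x) = 0" if "g \<in> W" "x \<in> N" "g x = 0" for g x r
  proof -
    have "g \<in> dual" using that(1) assms by blast
    then show ?thesis using hom_scale that(2,3) E.sc_zero by fastforce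
  qed
  moreover have "g 0 = 0" if "g \<in> W" for g using that assms hom_zero[OF module_N] by blast
  ultimately show ?thesis
    unfolding submodule_def common_zeros_def using N.zero_in N.add_in N.sc_in by auto
qed

lemma vanishing_homs_zero: "vanishing_homs {0} = dual"
  unfolding vanishing_homs_def using hom_zero[OF module_N] by blast

lemma vanishing_homs_self: "vanishing_homs N = {0}"
  unfolding vanishing_homs_def using D.zero_in hom_outside by (fastforce simp: fun_eq_iff)

lemma common_zeros_zero: "common_zeros {0} = N"
  unfolding common_zeros_def by simp

lemma subset_vanishing_homs_common_zeros: "W \<subseteq> dual \<Longrightarrow> W \<subseteq> vanishing_homs (common_zeros W)"
  unfolding vanishing_homs_def common_zeros_def by blast

lemma common_zeros_ne_self:
  assumes W: "submodule dual dual_sc W" "W \<noteq> {0}"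
  shows "common_zeros W \<noteq> N"
proof -
  obtain g where g: "g \<in> W" "g \<noteq> 0" using W unfolding submodule_def by blast
  then obtain x where x: "g x \<noteq> 0" by (auto simp: fun_eq_iff)
  moreover have "g \<in> dual" using g(1) submodule_subset[OF W(1)] by blast
  ultimately have "x \<in> N" using hom_outside by blast
  then show ?thesis using g(1) x unfolding common_zeros_def by blast
qed

lemma common_zeros_ne_zero:
  assumes closed: "vanishing_homs (common_zeros W) = W" and "W \<noteq> dual"
  shows "common_zeros W \<noteq> {0}"
  using assms vanishing_homs_zero by auto

lemma evaluation_hom:
  assumes x: "x \<in> N"
  shows "evaluation x \<in> hom_mod dual dual_sc E scE"
  unfolding hom_mod_def[of dual] evaluation_def
proof (intro CollectI conjI ballI allI impI)
  fix f assume f: "f \<in> dual"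
  show "(if f \<in> dual then f x else 0) \<in> E" using hom_in[OF f x] f by simp
  fix r show "(if dual_sc r f \<in> dual then dual_sc r f x else 0) = scE r (if f \<in> dual then f x else 0)"
    using f x D.sc_in by (simp add: hom_sc_def)
next
  fix f g assume "f \<in> dual" "g \<in> dual"
  then show "(if f + g \<in> dual then (f + g) x else 0) = (if f \<in> dual then f x else 0) + (if g \<in> dual then g x else 0)"
    using D.add_in by simp
qed simp

lemma quotient_torsion_free_vanishing_homs:
  assumes V: "V \<subseteq> N" and divisible: "F_divisible F V scN"
  shows "quotient_F_torsion_free F dual dual_sc (vanishing_homs V)"
  unfolding quotient_F_torsion_free_def
proof (intro ballI impI)
  fix a f assume a: "a \<in> F" and f: "f \<in> dual" and af: "\<forall>r\<in>a. dual_sc r f \<in> vanishing_homs V"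
  have "f v = 0" if v: "v \<in> V" for v
  proof (rule hom_vanishes_on_ideal_smult[OF module_N f V])
    show "\<forall>r\<in>a. \<forall>v\<in>V. scE r (f v) = 0"
      using af V by (auto simp: vanishing_homs_def hom_sc_def subset_iff)
    show "v \<in> ideal_smult a V scN" using divisible a v unfolding F_divisible_def by blast
  qed
  then show "f \<in> vanishing_homs V" using f unfolding vanishing_homs_def by blast
qed

lemma quotient_torsion_free_common_zeros:
  assumes W: "W \<subseteq> dual" and divisible: "F_divisible F W dual_sc"
  shows "quotient_F_torsion_free F N scN (common_zeros W)"
  unfolding quotient_F_torsion_free_def
proof (intro ballI impI)
  fix a x assume a: "a \<in> F" and x: "x \<in> N" and ax: "\<forall>r\<in>a. scN r x \<in> common_zeros W"
  have "g x = 0" if g: "g \<in> W" for g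
  proof -
    have "evaluation x g = 0"
    proof (rule hom_vanishes_on_ideal_smult[OF D.module evaluation_hom[OF x] W])
      show "\<forall>r\<in>a. \<forall>h\<in>W. scE r (evaluation x h) = 0"
        using ax W x unfolding common_zeros_def evaluation_def by (auto simp: hom_scale[symmetric])
      show "g \<in> ideal_smult a W dual_sc" using divisible a g unfolding F_divisible_def by blast
    qed
    then show ?thesis using g W unfolding evaluation_def by auto
  qed
  then show "x \<in> common_zeros W" using x unfolding common_zeros_def by blast
qed

end

locale matlis_dual = hom_dual N scN E scE
  for N :: "'n::ab_group_add set" and scN :: "'r::comm_ring_1 \<Rightarrow> 'n \<Rightarrow> 'n"
    and E :: "'e::ab_group_add set" and scE :: "'r \<Rightarrow> 'e \<Rightarrow> 'e" +
  fixes m :: "'r set"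
  assumes local: "local_ring_max m" and hull: "injective_hull_residue m E scE"
begin

lemma injective: "injective_module E scE"
  using hull unfolding injective_hull_residue_def by blast

lemma vanishing_homs_separates:
  assumes "submodule N scN U" "x \<in> N" "x \<notin> U"
  shows "\<exists>f\<in>vanishing_homs U. f x \<noteq> 0"
  using hom_separates_from_submodule[OF module_N local hull assms] unfolding vanishing_homs_def by blast

lemma vanishing_homs_ne_zero:
  assumes U: "submodule N scN U" "U \<noteq> N"
  shows "vanishing_homs U \<noteq> {0}"
proof -
  obtain x where "x \<in> N" "x \<notin> U" using U unfolding submodule_def by blast
  then obtain f where "f \<in> vanishing_homs U" "f x \<noteq> 0" using vanishing_homs_separates[OF U(1)] by blast
  then show ?thesis by auto
qed

lemma vanishing_homs_ne_dual:
  assumes U: "submodule N scN U" "U \<noteq> {0}"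
  shows "vanishing_homs U \<noteq> dual"
proof -
  obtain x where x: "x \<in> U" "x \<noteq> 0" using U unfolding submodule_def by blast
  then have "x \<in> N" using submodule_subset[OF U(1)] by blast
  then obtain f where "f \<in> dual" "f x \<noteq> 0"
    using vanishing_homs_separates[OF N.submodule_zero] x(2) unfolding vanishing_homs_def by blast
  then show ?thesis using x(1) unfolding vanishing_homs_def by blast
qed

lemma dual_eq_zero_iff: "dual = {0} \<longleftrightarrow> N = {0}"
proof
  assume "dual = {0}"
  then show "N = {0}" using vanishing_homs_ne_zero[OF N.submodule_zero] vanishing_homs_zero by auto
next
  assume "N = {0}"
  then show "dual = {0}" using vanishing_homs_zero vanishing_homs_self by simp
qed

lemma common_zeros_dual: "common_zeros dual = {0}"
proof -
  have "x = 0" if x: "x \<in> N" "\<forall>f\<in>dual. f x = 0" for x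
  proof (rule ccontr)
    assume "x \<noteq> 0"
    then obtain f where "f \<in> vanishing_homs {0}" "f x \<noteq> 0"
      using vanishing_homs_separates[OF N.submodule_zero x(1)] by blast
    then show False using x(2) vanishing_homs_zero by auto
  qed
  moreover have "0 \<in> common_zeros dual"
    unfolding common_zeros_def using N.zero_in hom_zero[OF module_N] by blast
  ultimately show ?thesis unfolding common_zeros_def by auto
qed

lemma divisible_vanishing_homs:
  assumes noeth: "noetherian_ring TYPE('r)" and ideals: "\<forall>a\<in>F. r_ideal a"
    and U: "submodule N scN U" and no_torsion: "quotient_F_torsion_free F N scN U"
  shows "F_divisible F (vanishing_homs U) dual_sc"
  unfolding F_divisible_def
proof
  fix a assume a: "a \<in> F"
  show "ideal_smult a (vanishing_homs U) dual_sc = vanishing_homs U"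
  proof
    show "ideal_smult a (vanishing_homs U) dual_sc \<subseteq> vanishing_homs U"
      by (rule D.ideal_smult_subset[OF vanishing_homs_submodule subset_refl])
    show "vanishing_homs U \<subseteq> ideal_smult a (vanishing_homs U) dual_sc"
    proof
      fix f assume "f \<in> vanishing_homs U"
      then have f: "f \<in> dual" "\<forall>u\<in>U. f u = 0" unfolding vanishing_homs_def by blast+
      have "\<And>x. x \<in> N \<Longrightarrow> \<forall>r\<in>a. scN r x \<in> U \<Longrightarrow> x \<in> U"
        using no_torsion a unfolding quotient_F_torsion_free_def by blast
      from vanishing_hom_in_ideal_smult[OF noeth ideals[rule_format, OF a] module_N module_E injective U this f]
      show "f \<in> ideal_smult a (vanishing_homs U) dual_sc" unfolding vanishing_homs_def .
    qed
  qed
qed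

lemma divisible_common_zeros:
  assumes ideals: "\<forall>a\<in>F. r_ideal a" and W: "submodule dual dual_sc W"
    and closed: "vanishing_homs (common_zeros W) = W"
    and no_torsion: "quotient_F_torsion_free F dual dual_sc W"
  shows "F_divisible F (common_zeros W) scN"
  unfolding F_divisible_def
proof
  fix a assume a: "a \<in> F"
  have WD: "W \<subseteq> dual" using submodule_subset[OF W] .
  have V: "submodule N scN (common_zeros W)" by (rule common_zeros_submodule[OF WD])
  then have VN: "common_zeros W \<subseteq> N" by (rule submodule_subset)
  show "ideal_smult a (common_zeros W) scN = common_zeros W"
  proof
    show "ideal_smult a (common_zeros W) scN \<subseteq> common_zeros W"
      by (rule N.ideal_smult_subset[OF V subset_refl])
    show "common_zeros W \<subseteq> ideal_smult a (common_zeros W) scN"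
    proof
      fix x assume x: "x \<in> common_zeros W"
      show "x \<in> ideal_smult a (common_zeros W) scN"
      proof (rule ccontr)
        assume x_notin: "x \<notin> ideal_smult a (common_zeros W) scN"
        have "submodule N scN (ideal_smult a (common_zeros W) scN)"
          using N.ideal_smult_submodule[OF _ VN] ideals a by blast
        then obtain h where h: "h \<in> vanishing_homs (ideal_smult a (common_zeros W) scN)" "h x \<noteq> 0"
          using vanishing_homs_separates x x_notin VN by blast
        \<comment> \<open>a h vanishes on the common zeros of W, so it lies in W by closedness\<close>
        have "dual_sc r h \<in> W" if r: "r \<in> a" for r
        proof -
          have "dual_sc r h \<in> dual" using h(1) D.sc_in unfolding vanishing_homs_def by blast
          moreover have "dual_sc r h y = 0" if "y \<in> common_zeros W" for y
            using that h(1) VN ideal_smult_single[OF r] hom_scale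
            unfolding vanishing_homs_def hom_sc_def by fastforce
          ultimately show ?thesis using closed unfolding vanishing_homs_def by blast
        qed
        then have "h \<in> W"
          using no_torsion a h(1) unfolding quotient_F_torsion_free_def vanishing_homs_def by blast
        then show False using x h(2) unfolding common_zeros_def by blast
      qed
    qed
  qed
qed

lemma reflexive_closed:
  assumes reflexive: "reflexive_mod N scN E scE" and W: "submodule dual dual_sc W"
  shows "vanishing_homs (common_zeros W) = W"
proof
  have WD: "W \<subseteq> dual" using submodule_subset[OF W] .
  then show "W \<subseteq> vanishing_homs (common_zeros W)" by (rule subset_vanishing_homs_common_zeros)
  show "vanishing_homs (common_zeros W) \<subseteq> W"
  proof
    fix f assume f: "f \<in> vanishing_homs (common_zeros W)"
    show "f \<in> W"
    proof (rule ccontr)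
      assume "f \<notin> W"
      then obtain \<phi> where \<phi>: "\<phi> \<in> hom_mod dual dual_sc E scE" "\<forall>g\<in>W. \<phi> g = 0" "\<phi> f \<noteq> 0"
        using hom_separates_from_submodule[OF D.module local hull W] f
        unfolding vanishing_homs_def by blast
      have "\<phi> \<in> (\<lambda>x. if x \<in> N then evaluation x else 0) ` N"
        using reflexive \<phi>(1) unfolding reflexive_mod_def Let_def evaluation_def bij_betw_def by blast
      then obtain x where x: "x \<in> N" "\<phi> = evaluation x" by auto
      then have "x \<in> common_zeros W"
        using \<phi>(2) WD unfolding common_zeros_def evaluation_def by (auto simp: subset_iff)
      then show False using f \<phi>(3) x(2) unfolding vanishing_homs_def evaluation_def by auto
    qed
  qed
qed

end

context matlis_dual
begin

lemma simple_divisible_if_dual_simple_torsion_free: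
  assumes ideals: "\<forall>a\<in>F. r_ideal a" and simple: "simple_F_torsion_free F dual dual_sc"
  shows "simple_F_divisible F N scN"
proof -
  have "dual \<noteq> {0}" and torsion_free: "F_torsion_free F dual dual_sc"
    and minimal: "\<And>W. submodule dual dual_sc W \<Longrightarrow> W \<noteq> {0} \<Longrightarrow> W \<noteq> dual \<Longrightarrow>
      \<not> quotient_F_torsion_free F dual dual_sc W"
    using simple unfolding simple_F_torsion_free_def by blast+
  have "vanishing_homs (common_zeros {0}) = {0}"
    by (simp add: common_zeros_zero vanishing_homs_self)
  moreover have "quotient_F_torsion_free F dual dual_sc {0}"
    using torsion_free D.F_torsion_free_iff_quotient_zero by blast
  ultimately have "F_divisible F N scN"
    using divisible_common_zeros[OF ideals D.submodule_zero] common_zeros_zero by simp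
  moreover have "\<not> F_divisible F V scN" if V: "submodule N scN V" "V \<noteq> {0}" "V \<noteq> N" for V
  proof
    assume "F_divisible F V scN"
    then have "quotient_F_torsion_free F dual dual_sc (vanishing_homs V)"
      by (rule quotient_torsion_free_vanishing_homs[OF submodule_subset[OF V(1)]])
    then show False
      using minimal[OF vanishing_homs_submodule vanishing_homs_ne_zero[OF V(1,3)] vanishing_homs_ne_dual[OF V(1,2)]]
      by blast
  qed
  moreover have "N \<noteq> {0}" using \<open>dual \<noteq> {0}\<close> dual_eq_zero_iff by blast
  ultimately show ?thesis unfolding simple_F_divisible_def by blast
qed

lemma simple_torsion_free_if_dual_simple_divisible:
  assumes noeth: "noetherian_ring TYPE('r)" and ideals: "\<forall>a\<in>F. r_ideal a"
    and simple: "simple_F_divisible F dual dual_sc"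
  shows "simple_F_torsion_free F N scN"
proof -
  have "dual \<noteq> {0}" and divisible: "F_divisible F dual dual_sc"
    and minimal: "\<And>W. submodule dual dual_sc W \<Longrightarrow> W \<noteq> {0} \<Longrightarrow> W \<noteq> dual \<Longrightarrow> \<not> F_divisible F W dual_sc"
    using simple unfolding simple_F_divisible_def by blast+
  have "quotient_F_torsion_free F N scN (common_zeros dual)"
    by (rule quotient_torsion_free_common_zeros[OF subset_refl divisible])
  then have "F_torsion_free F N scN"
    using common_zeros_dual N.F_torsion_free_iff_quotient_zero by simp
  moreover have "\<not> quotient_F_torsion_free F N scN U" if U: "submodule N scN U" "U \<noteq> {0}" "U \<noteq> N" for U
  proof
    assume "quotient_F_torsion_free F N scN U"
    then have "F_divisible F (vanishing_homs U) dual_sc" by (rule divisible_vanishing_homs[OF noeth ideals U(1)])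
    then show False
      using minimal[OF vanishing_homs_submodule vanishing_homs_ne_zero[OF U(1,3)] vanishing_homs_ne_dual[OF U(1,2)]]
      by blast
  qed
  moreover have "N \<noteq> {0}" using \<open>dual \<noteq> {0}\<close> dual_eq_zero_iff by blast
  ultimately show ?thesis unfolding simple_F_torsion_free_def by blast
qed

lemma dual_simple_torsion_free_if_simple_divisible:
  assumes ideals: "\<forall>a\<in>F. r_ideal a" and reflexive: "reflexive_mod N scN E scE"
    and simple: "simple_F_divisible F N scN"
  shows "simple_F_torsion_free F dual dual_sc"
proof -
  have "N \<noteq> {0}" and divisible: "F_divisible F N scN"
    and minimal: "\<And>V. submodule N scN V \<Longrightarrow> V \<noteq> {0} \<Longrightarrow> V \<noteq> N \<Longrightarrow> \<not> F_divisible F V scN"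
    using simple unfolding simple_F_divisible_def by blast+
  have "quotient_F_torsion_free F dual dual_sc (vanishing_homs N)"
    by (rule quotient_torsion_free_vanishing_homs[OF subset_refl divisible])
  then have "F_torsion_free F dual dual_sc"
    using vanishing_homs_self D.F_torsion_free_iff_quotient_zero by simp
  moreover have "\<not> quotient_F_torsion_free F dual dual_sc W"
    if W: "submodule dual dual_sc W" "W \<noteq> {0}" "W \<noteq> dual" for W
  proof
    assume no_torsion: "quotient_F_torsion_free F dual dual_sc W"
    have closed: "vanishing_homs (common_zeros W) = W" by (rule reflexive_closed[OF reflexive W(1)])
    have "submodule N scN (common_zeros W)"
      by (rule common_zeros_submodule[OF submodule_subset[OF W(1)]])
    from minimal[OF this common_zeros_ne_zero[OF closed W(3)] common_zeros_ne_self[OF W(1,2)]]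
    show False using divisible_common_zeros[OF ideals W(1) closed no_torsion] by blast
  qed
  moreover have "dual \<noteq> {0}" using \<open>N \<noteq> {0}\<close> dual_eq_zero_iff by blast
  ultimately show ?thesis unfolding simple_F_torsion_free_def by blast
qed

lemma dual_simple_divisible_if_simple_torsion_free:
  assumes noeth: "noetherian_ring TYPE('r)" and ideals: "\<forall>a\<in>F. r_ideal a"
    and reflexive: "reflexive_mod N scN E scE" and simple: "simple_F_torsion_free F N scN"
  shows "simple_F_divisible F dual dual_sc"
proof -
  have "N \<noteq> {0}" and torsion_free: "F_torsion_free F N scN"
    and minimal: "\<And>U. submodule N scN U \<Longrightarrow> U \<noteq> {0} \<Longrightarrow> U \<noteq> N \<Longrightarrow> \<not> quotient_F_torsion_free F N scN U"
    using simple unfolding simple_F_torsion_free_def by blast+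
  have "F_divisible F (vanishing_homs {0}) dual_sc"
    using divisible_vanishing_homs[OF noeth ideals N.submodule_zero] torsion_free
      N.F_torsion_free_iff_quotient_zero by blast
  then have "F_divisible F dual dual_sc" using vanishing_homs_zero by simp
  moreover have "\<not> F_divisible F W dual_sc" if W: "submodule dual dual_sc W" "W \<noteq> {0}" "W \<noteq> dual" for W
  proof
    assume "F_divisible F W dual_sc"
    then have no_torsion: "quotient_F_torsion_free F N scN (common_zeros W)"
      by (rule quotient_torsion_free_common_zeros[OF submodule_subset[OF W(1)]])
    have closed: "vanishing_homs (common_zeros W) = W" by (rule reflexive_closed[OF reflexive W(1)])
    have "submodule N scN (common_zeros W)"
      by (rule common_zeros_submodule[OF submodule_subset[OF W(1)]])
    from minimal[OF this common_zeros_ne_zero[OF closed W(3)] common_zeros_ne_self[OF W(1,2)]]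
    show False using no_torsion by blast
  qed
  moreover have "dual \<noteq> {0}" using \<open>N \<noteq> {0}\<close> dual_eq_zero_iff by blast
  ultimately show ?thesis unfolding simple_F_divisible_def by blast
qed

end

theorem lemma1p7:
  fixes m :: "'r::comm_ring_1 set" and F :: "'r set set"
    and E :: "'e::ab_group_add set" and scE :: "'r \<Rightarrow> 'e \<Rightarrow> 'e"
    and N :: "'n::ab_group_add set" and scN :: "'r \<Rightarrow> 'n \<Rightarrow> 'n"
  assumes "noetherian_ring TYPE('r)"
    and "local_ring_max m"
    and "gabriel_topology F"
    and "injective_hull_residue m E scE"
    and "r_module N scN"
  shows "(simple_F_torsion_free F (hom_mod N scN E scE) (hom_sc N scE) \<longrightarrow> simple_F_divisible F N scN)
    \<and> (simple_F_divisible F (hom_mod N scN E scE) (hom_sc N scE) \<longrightarrow> simple_F_torsion_free F N scN)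
    \<and> (reflexive_mod N scN E scE \<longrightarrow>
         (simple_F_divisible F N scN \<longrightarrow> simple_F_torsion_free F (hom_mod N scN E scE) (hom_sc N scE))
       \<and> (simple_F_torsion_free F N scN \<longrightarrow> simple_F_divisible F (hom_mod N scN E scE) (hom_sc N scE)))"
proof -
  interpret matlis_dual N scN E scE m
    using assms(2,4,5) by unfold_locales (auto simp: injective_hull_residue_def)
  have ideals: "\<forall>a\<in>F. r_ideal a" using assms(3) unfolding gabriel_topology_def by blast
  show ?thesis
    using simple_divisible_if_dual_simple_torsion_free[OF ideals]
      simple_torsion_free_if_dual_simple_divisible[OF assms(1) ideals]
      dual_simple_torsion_free_if_simple_divisible[OF ideals]
      dual_simple_divisible_if_simple_torsion_free[OF assms(1) ideals]
    by blast
qed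

end
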